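(* Let $m\ge 1$ and $n\ge 2$ be integers. For every $\mathbf a\in mB^n$, $$f_m(n,2,\mathbf a)=mn+m.$$
   Context: $mB^n=\{0,1,\ldots,m\}^n\subseteq\mathbb{R}^n$. A family of affine hyperplanes in $\mathbb{R}^n$ is a finite multiset, and a point is covered $j$ times if exactly $j$ members of the multiset contain it. For $\mathbf a\in mB^n$ and a positive integer $k$, $f_m(n,k,\mathbf a)$ denotes the minimum size of a family of affine hyperplanes such that every point of $mB^n\setminus\{\mathbf a\}$ is covered at least $k$ times and $\mathbf a$ lies on no member of the family. *)

theory Defs
  imports "HOL-Analysis.Analysis" "HOL-Library.Multiset"
begin

text \<open>The grid mB^n = {0,...,m}^n inside R^n, with R^n = real^'n and n = CARD('n).\<close>
definition grid :: "nat \<Rightarrow> (real^'n) set" where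
  "grid m = {x. \<forall>i. x $ i \<in> real ` {0..m}}"

definition affine_hyperplane :: "(real^'n) set \<Rightarrow> bool" where
  "affine_hyperplane H \<longleftrightarrow> (\<exists>c b. c \<noteq> 0 \<and> H = {x. c \<bullet> x = b})"

definition cover_mult :: "(real^'n) set multiset \<Rightarrow> real^'n \<Rightarrow> nat" where
  "cover_mult F x = size (filter_mset (\<lambda>H. x \<in> H) F)"

definition k_cover_avoiding :: "nat \<Rightarrow> nat \<Rightarrow> real^'n \<Rightarrow> (real^'n) set multiset \<Rightarrow> bool" where
  "k_cover_avoiding m k a F \<longleftrightarrow>
     (\<forall>H\<in>#F. affine_hyperplane H) \<and>
     (\<forall>x\<in>grid m - {a}. cover_mult F x \<ge> k) \<and>
     (\<forall>H\<in>#F. a \<notin> H)"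

text \<open>f_m(n,k,a), with n = CARD('n) determined by the type of a.\<close>
definition f_cov :: "nat \<Rightarrow> nat \<Rightarrow> real^'n \<Rightarrow> nat" where
  "f_cov m k a = (LEAST N. \<exists>F. k_cover_avoiding m k a F \<and> size F = N)"

end

theory Submission
  imports Defs "HOL-Computational_Algebra.Polynomial"
begin

text \<open>
  Upper bound: the \<open>m n\<close> hyperplanes \<open>x$i = t\<close> with \<open>t \<in> {0..m}\<close>, \<open>t \<noteq> a$i\<close> cover each grid
  point once for every coordinate in which it differs from \<open>a\<close>, and \<open>m\<close> further hyperplanes
  missing \<open>a\<close> catch the points that differ from \<open>a\<close> in a single coordinate.

  Lower bound, by the polynomial method: fix a coordinate \<open>i\<close> and restrict the product of the
  affine forms defining the family to the lines through \<open>z\<close> parallel to the \<open>i\<close>-th axis. This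
  gives a polynomial \<open>P\<^sub>z(t)\<close> whose coefficient of \<open>t\<^sup>j\<close> is a polynomial of degree at most
  \<open>N - j\<close> in the other coordinates of \<open>z\<close>. Taking the coefficient of \<open>t\<^sup>2\<^sup>m\<close> of \<open>P\<^sub>z\<close> modulo
  \<open>(t - a$i) \<Prod>s\<noteq>a$i. (t - s)\<^sup>2\<close> yields a polynomial \<open>G(z)\<close> of degree at most \<open>N - 2m\<close>. The double
  covering makes \<open>G\<close> vanish at all grid points \<open>z \<noteq> a\<close> with \<open>z$i = a$i\<close>, and avoiding \<open>a\<close> makes
  \<open>G(a) \<noteq> 0\<close>. By the coefficient formula of the Combinatorial Nullstellensatz on \<open>{0..m}\<^sup>n\<^sup>-\<^sup>1\<close>
  this forces \<open>N - 2m \<ge> m(n - 1)\<close>.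
\<close>

section \<open>Lagrange weights and grid sums\<close>

text \<open>The weight is \<open>1 / (\<Prod>t\<in>{0..k}-{s}. s - t)\<close>.\<close>
definition lagrange_weight :: "nat \<Rightarrow> nat \<Rightarrow> real" where
  "lagrange_weight k s = (-1) ^ (k - s) / (fact s * fact (k - s))"

lemma lagrange_weight_nonzero: "lagrange_weight k s \<noteq> 0"
  by (simp add: lagrange_weight_def)

lemma lagrange_weight_mult_diff:
  assumes "s < k"
  shows "lagrange_weight k s * (real s - real k) = lagrange_weight (k - 1) s"
proof -
  obtain d where d: "k - s = Suc d" using assms by (metis Suc_diff_Suc)
  then have "k - 1 - s = d" and "real k = real s + 1 + real d" using assms by linarith+
  then show ?thesis unfolding lagrange_weight_def d
    by (simp add: divide_simps) (simp add: algebra_simps)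
qed

lemma sum_lagrange_weight_eq_0:
  assumes "k > 0"
  shows "(\<Sum>s\<le>k. lagrange_weight k s) = 0"
proof -
  have "(\<Sum>s\<le>k. lagrange_weight k s) = (\<Sum>s\<le>k. of_nat (k choose s) * 1 ^ s * (-1) ^ (k - s)) / fact k"
    by (simp add: sum_divide_distrib lagrange_weight_def binomial_fact field_simps)
  also have "\<dots> = (1 + (-1)) ^ k / fact k"
    by (simp only: binomial_ring)
  finally show ?thesis using assms by simp
qed

definition indep_coords :: "'n set \<Rightarrow> (real^'n \<Rightarrow> real) \<Rightarrow> bool" where
  "indep_coords J f \<longleftrightarrow> (\<forall>x y. (\<forall>i. i \<notin> J \<longrightarrow> x $ i = y $ i) \<longrightarrow> f x = f y)"

inductive coord_poly :: "'n::finite set \<Rightarrow> nat \<Rightarrow> (real^'n \<Rightarrow> real) \<Rightarrow> bool" for J where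
  indep: "indep_coords J f \<Longrightarrow> coord_poly J d f"
| coord_mult: "coord_poly J d f \<Longrightarrow> j \<in> J \<Longrightarrow> coord_poly J (Suc d) (\<lambda>x. x $ j * f x)"
| add: "coord_poly J d f \<Longrightarrow> coord_poly J d g \<Longrightarrow> coord_poly J d (\<lambda>x. f x + g x)"
| indep_mult: "coord_poly J d f \<Longrightarrow> indep_coords J g \<Longrightarrow> coord_poly J d (\<lambda>x. g x * f x)"
| mono: "coord_poly J d f \<Longrightarrow> d \<le> e \<Longrightarrow> coord_poly J e f"

lemma coord_poly_const: "coord_poly J d (\<lambda>x. c)"
  by (rule coord_poly.indep) (simp add: indep_coords_def)

lemma coord_poly_scale: "coord_poly J d f \<Longrightarrow> coord_poly J d (\<lambda>x. c * f x)"
  using coord_poly.indep_mult[of J d f "\<lambda>x. c"] by (simp add: indep_coords_def)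

lemma coord_poly_sum:
  "finite A \<Longrightarrow> (\<And>a. a \<in> A \<Longrightarrow> coord_poly J d (f a)) \<Longrightarrow> coord_poly J d (\<lambda>x. \<Sum>a\<in>A. f a x)"
  by (induction A rule: finite_induct) (auto intro: coord_poly_const coord_poly.add)

lemma coord_poly_affine_mult:
  assumes "coord_poly J d f"
  shows "coord_poly J (Suc d) (\<lambda>x. ((\<Sum>j\<in>J. c $ j * x $ j) - b) * f x)"
proof -
  have "coord_poly J (Suc d) (\<lambda>x. (\<Sum>j\<in>J. c $ j * (x $ j * f x)) + (- b) * f x)"
    by (intro coord_poly.add coord_poly_sum coord_poly_scale coord_poly.coord_mult assms
        coord_poly.mono[OF coord_poly_scale[OF assms]]) auto
  then show ?thesis by (simp add: algebra_simps sum_distrib_right sum_distrib_left)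
qed

definition set_coords :: "real^'n \<Rightarrow> 'n set \<Rightarrow> ('n \<Rightarrow> nat) \<Rightarrow> real^'n" where
  "set_coords x J y = (\<chi> i. if i \<in> J then real (y i) else x $ i)"

lemma set_coords_nth: "set_coords x J y $ i = (if i \<in> J then real (y i) else x $ i)"
  by (simp add: set_coords_def)

definition grid_weight :: "'n set \<Rightarrow> ('n \<Rightarrow> nat) \<Rightarrow> ('n \<Rightarrow> nat) \<Rightarrow> real" where
  "grid_weight J k y = (\<Prod>i\<in>J. lagrange_weight (k i) (y i))"

text \<open>Up to the factor \<open>\<Prod>i\<in>J. fact (k i)\<close>, the mixed finite difference of order \<open>k\<close> in the
  coordinates \<open>J\<close>. It extracts the coefficient of \<open>\<Prod>i\<in>J. x$i ^ k i\<close> from a polynomial of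
  degree at most \<open>sum k J\<close> (coefficient formula of the Combinatorial Nullstellensatz).\<close>
definition grid_sum :: "'n::finite set \<Rightarrow> ('n \<Rightarrow> nat) \<Rightarrow> (real^'n \<Rightarrow> real) \<Rightarrow> real^'n \<Rightarrow> real" where
  "grid_sum J k f x = (\<Sum>y\<in>PiE J (\<lambda>i. {0..k i}). grid_weight J k y * f (set_coords x J y))"

lemma grid_weight_nonzero: "finite J \<Longrightarrow> grid_weight J k y \<noteq> 0"
  by (simp add: grid_weight_def lagrange_weight_nonzero)

lemma grid_sum_coord_mult:
  fixes J :: "'n::finite set"
  assumes j: "j \<in> J" and kj: "k j > 0"
  shows "grid_sum J k (\<lambda>x. x $ j * f x) x = real (k j) * grid_sum J k f x + grid_sum J (k(j := k j - 1)) f x"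
proof -
  define k' where "k' = k(j := k j - 1)"
  define K where "K = PiE J (\<lambda>i. {0..k i})"
  define K' where "K' = PiE J (\<lambda>i. {0..k' i})"
  have K'_eq: "K' = {y \<in> K. y j \<noteq> k j}"
  proof (intro set_eqI iffI)
    fix y assume "y \<in> K'"
    then show "y \<in> {y \<in> K. y j \<noteq> k j}"
      using j kj unfolding K_def K'_def k'_def PiE_iff by (force split: if_splits)
  next
    fix y assume "y \<in> {y \<in> K. y j \<noteq> k j}"
    then show "y \<in> K'"
      unfolding K_def K'_def k'_def PiE_iff by auto
  qed
  have weight: "grid_weight J k y * (real (y j) - real (k j)) = grid_weight J k' y" if "y \<in> K'" for y
  proof -
    have "y j < k j" using that j kj by (auto simp: K'_def k'_def PiE_iff)
    have split: "prod g J = g j * prod g (J - {j})" for g :: "'n \<Rightarrow> real"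
      using prod.remove[of J j g] j by simp
    have "(\<Prod>i\<in>J-{j}. lagrange_weight (k' i) (y i)) = (\<Prod>i\<in>J-{j}. lagrange_weight (k i) (y i))"
      by (rule prod.cong) (auto simp: k'_def)
    then show ?thesis
      using lagrange_weight_mult_diff[OF \<open>y j < k j\<close>]
      unfolding grid_weight_def split[of "\<lambda>i. lagrange_weight (k i) (y i)"]
        split[of "\<lambda>i. lagrange_weight (k' i) (y i)"]
      by (simp add: k'_def)
  qed
  have "grid_sum J k (\<lambda>x. x $ j * f x) x - real (k j) * grid_sum J k f x
      = (\<Sum>y\<in>K. grid_weight J k y * (real (y j) - real (k j)) * f (set_coords x J y))"
    unfolding grid_sum_def K_def sum_distrib_left sum_subtractf[symmetric] set_coords_nth
    using j by (intro sum.cong) (auto simp: algebra_simps)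
  also have "\<dots> = (\<Sum>y\<in>K'. grid_weight J k y * (real (y j) - real (k j)) * f (set_coords x J y))"
    unfolding K'_eq by (rule sum.mono_neutral_right) (auto simp: K_def finite_PiE)
  also have "\<dots> = grid_sum J k' f x"
    unfolding grid_sum_def K'_def[symmetric] by (intro sum.cong) (simp_all add: weight)
  finally show ?thesis by (simp add: k'_def)
qed

lemma grid_sum_indep_mult:
  assumes "indep_coords J g"
  shows "grid_sum J k (\<lambda>x. g x * f x) x = g x * grid_sum J k f x"
proof -
  have "g (set_coords x J y) = g x" for y
    using assms by (simp add: indep_coords_def set_coords_nth)
  then show ?thesis by (simp add: grid_sum_def sum_distrib_left algebra_simps)
qed

lemma coord_poly_grid_sum_eq_0:
  fixes J :: "'n::finite set"
  assumes "coord_poly J d f" and "d < sum k J"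
  shows "grid_sum J k f x = 0"
  using assms
proof (induction arbitrary: k x rule: coord_poly.induct)
  case (indep f d)
  obtain i where i: "i \<in> J" "k i > 0"
    using indep.prems by (metis gr0I sum.neutral less_nat_zero_code)
  have "grid_sum J k f x = f x * (\<Sum>y\<in>PiE J (\<lambda>i. {0..k i}). grid_weight J k y)"
    using grid_sum_indep_mult[OF indep.hyps, of k "\<lambda>_. 1"] by (simp add: grid_sum_def)
  also have "(\<Sum>y\<in>PiE J (\<lambda>i. {0..k i}). grid_weight J k y) = (\<Prod>i\<in>J. \<Sum>s\<le>k i. lagrange_weight (k i) s)"
    unfolding grid_weight_def atMost_atLeast0 by (rule prod_sum_PiE[symmetric]) auto
  also have "\<dots> = 0"
    using i sum_lagrange_weight_eq_0[OF i(2)] by auto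
  finally show ?case by simp
next
  case (coord_mult d f j)
  show ?case
  proof (cases "k j = 0")
    case True
    have coord_0: "set_coords x J y $ j = 0" if "y \<in> PiE J (\<lambda>i. {0..k i})" for y
      using that True coord_mult.hyps(2) by (auto simp: PiE_iff set_coords_nth)
    show ?thesis unfolding grid_sum_def by (intro sum.neutral ballI) (simp add: coord_0)
  next
    case False
    have "sum (k(j := k j - 1)) (J - {j}) = sum k (J - {j})"
      by (rule sum.cong) auto
    then have "sum (k(j := k j - 1)) J = sum k J - 1"
      using False coord_mult.hyps(2) sum.remove[of J j k] sum.remove[of J j "k(j := k j - 1)"] by simp
    then show ?thesis
      using grid_sum_coord_mult[OF coord_mult.hyps(2)] False coord_mult.IH coord_mult.prems by simp
  qed
next
  case (add d f g)
  then show ?case by (simp add: grid_sum_def algebra_simps sum.distrib)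
next
  case (indep_mult d f g)
  then show ?case by (simp add: grid_sum_indep_mult)
next
  case (mono d f e)
  then show ?case by simp
qed

lemma set_coords_eq_iff:
  assumes "y \<in> PiE J B" and "y' \<in> PiE J B"
  shows "set_coords x J y = set_coords x J y' \<longleftrightarrow> y = y'"
proof
  assume "set_coords x J y = set_coords x J y'"
  then have "y i = y' i" if "i \<in> J" for i
    using that by (metis of_nat_eq_iff set_coords_nth)
  then show "y = y'" by (rule PiE_ext[OF assms])
qed simp

lemma grid_sum_concentrated:
  assumes y0: "y0 \<in> PiE J (\<lambda>i. {0..k i})"
    and vanish: "\<And>y. y \<in> PiE J (\<lambda>i. {0..k i}) \<Longrightarrow> y \<noteq> y0 \<Longrightarrow> f (set_coords x J y) = 0"
  shows "grid_sum J k f x = grid_weight J k y0 * f (set_coords x J y0)"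
  unfolding grid_sum_def using vanish
  by (subst sum.remove[OF _ y0]) (auto simp: finite_PiE intro!: sum.neutral)

section \<open>Restricting a family of hyperplanes to a line\<close>

definition set_coord :: "'n \<Rightarrow> real^'n \<Rightarrow> real \<Rightarrow> real^'n" where
  "set_coord i x t = (\<chi> j. if j = i then t else x $ j)"

definition hyperplane_of :: "(real^'n) \<times> real \<Rightarrow> (real^'n) set" where
  "hyperplane_of cb = {x. fst cb \<bullet> x = snd cb}"

definition line_factor :: "'n::finite \<Rightarrow> real^'n \<Rightarrow> (real^'n) \<times> real \<Rightarrow> real poly" where
  "line_factor i x cb = [:(\<Sum>j\<in>UNIV-{i}. fst cb $ j * x $ j) - snd cb, fst cb $ i:]"

definition line_poly :: "'n::finite \<Rightarrow> ((real^'n) \<times> real) multiset \<Rightarrow> real^'n \<Rightarrow> real poly" where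
  "line_poly i C x = (\<Prod>cb\<in>#C. line_factor i x cb)"

lemma poly_line_factor: "poly (line_factor i x cb) t = fst cb \<bullet> set_coord i x t - snd cb"
  by (simp add: line_factor_def inner_vec_def sum.remove[of UNIV i] set_coord_def algebra_simps)

lemma poly_line_poly: "poly (line_poly i C x) t = (\<Prod>cb\<in>#C. fst cb \<bullet> set_coord i x t - snd cb)"
  by (simp add: line_poly_def poly_prod_mset multiset.map_comp comp_def poly_line_factor)

lemma line_poly_add_mset: "line_poly i (add_mset cb C) x = line_factor i x cb * line_poly i C x"
  by (simp add: line_poly_def)

lemma degree_line_poly_le: "degree (line_poly i C x) \<le> size C"
proof (induction C)
  case (add cb C)
  have "degree (line_poly i (add_mset cb C) x) \<le> degree (line_factor i x cb) + degree (line_poly i C x)"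
    unfolding line_poly_add_mset by (rule degree_mult_le)
  also have "\<dots> \<le> 1 + size C"
    using add.IH by (intro add_mono) (simp_all add: line_factor_def)
  finally show ?case by simp
qed (simp add: line_poly_def)

lemma coeff_linear_mult:
  "coeff ([:u, c:] * q) j = u * coeff q j + (if j = 0 then 0 else c * coeff q (j - 1))"
  by (cases j) (simp_all add: coeff_pCons)

lemma coord_poly_coeff_line_poly:
  "j \<le> size C \<Longrightarrow> coord_poly (UNIV-{i}) (size C - j) (\<lambda>x. coeff (line_poly i C x) j)"
proof (induction C arbitrary: j)
  case empty
  then show ?case by (simp add: line_poly_def coord_poly_const)
next
  case (add cb C)
  define c where "c = fst cb"
  define l where "l x = (\<Sum>j\<in>UNIV-{i}. c $ j * x $ j) - snd cb" for x
  have coeff_eq: "coeff (line_poly i (add_mset cb C) x) j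
      = l x * coeff (line_poly i C x) j + (if j = 0 then 0 else c $ i * coeff (line_poly i C x) (j - 1))" for x
    unfolding line_poly_add_mset line_factor_def coeff_linear_mult l_def c_def ..
  have low: "coord_poly (UNIV-{i}) (size (add_mset cb C) - j) (\<lambda>x. l x * coeff (line_poly i C x) j)"
  proof (cases "j \<le> size C")
    case True
    then show ?thesis
      using coord_poly_affine_mult[OF add.IH[OF True], of c "snd cb"] by (simp add: l_def Suc_diff_le)
  next
    case False
    then have "coeff (line_poly i C x) j = 0" for x
      using degree_line_poly_le[of i C x] by (simp add: coeff_eq_0)
    then show ?thesis by (simp add: coord_poly_const)
  qed
  have high: "coord_poly (UNIV-{i}) (size (add_mset cb C) - j) (\<lambda>x. c $ i * coeff (line_poly i C x) (j - 1))"
    if "j > 0"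
  proof -
    have "coord_poly (UNIV-{i}) (size C - (j - 1)) (\<lambda>x. coeff (line_poly i C x) (j - 1))"
      using that add.prems by (intro add.IH) simp
    moreover have "size C - (j - 1) = size (add_mset cb C) - j" using that by simp
    ultimately show ?thesis by (metis coord_poly_scale)
  qed
  show ?case
    unfolding coeff_eq using low high coord_poly.add[OF low] by (cases "j = 0") simp_all
qed

lemma cover_mult_hyperplane_of:
  "cover_mult (image_mset hyperplane_of C) x = size (filter_mset (\<lambda>cb. fst cb \<bullet> x = snd cb) C)"
  by (simp add: cover_mult_def filter_mset_image_mset hyperplane_of_def)

lemma power_size_dvd_prod_mset:
  fixes f :: "'a \<Rightarrow> 'b::comm_semiring_1"
  shows "(\<And>x. x \<in># M \<Longrightarrow> d dvd f x) \<Longrightarrow> d ^ size M dvd (\<Prod>x\<in>#M. f x)"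
  by (induction M) (auto intro: mult_dvd_mono)

lemma linear_power_cover_mult_dvd_line_poly:
  "[:-t, 1:] ^ cover_mult (image_mset hyperplane_of C) (set_coord i x t) dvd line_poly i C x"
proof -
  define P where "P = (\<lambda>cb. fst cb \<bullet> set_coord i x t = snd cb)"
  have "[:-t, 1:] dvd line_factor i x cb" if "P cb" for cb
    using that poly_eq_0_iff_dvd by (force simp: P_def poly_line_factor)
  then have "[:-t, 1:] ^ size (filter_mset P C) dvd (\<Prod>cb\<in>#filter_mset P C. line_factor i x cb)"
    by (intro power_size_dvd_prod_mset) simp
  also have "\<dots> dvd line_poly i C x"
    unfolding line_poly_def
    by (metis multiset_partition prod_mset.union image_mset_union dvd_triv_left)
  finally show ?thesis by (simp add: cover_mult_hyperplane_of P_def)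
qed

section \<open>A linear functional on polynomials\<close>

lemma prod_linear_powers_dvd:
  fixes p :: "'a::idom poly"
  assumes "finite S" "inj_on r S" "\<And>s. s \<in> S \<Longrightarrow> [:-r s, 1:] ^ e s dvd p"
  shows "(\<Prod>s\<in>S. [:-r s, 1:] ^ e s) dvd p"
  using assms
proof (induction S arbitrary: p rule: finite_induct)
  case (insert s S)
  show ?case
  proof (cases "p = 0")
    case False
    obtain q where q: "p = [:-r s, 1:] ^ e s * q" using insert.prems(2)[of s] by (metis dvdE insertI1)
    have "[:-r s', 1:] ^ e s' dvd q" if s': "s' \<in> S" for s'
    proof -
      have "r s' \<noteq> r s" using insert.prems(1) insert.hyps(2) s' by (auto simp: inj_on_def)
      then have "order (r s') ([:-r s, 1:] ^ e s) = 0" by (intro order_0I) simp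
      then have "order (r s') p = order (r s') q"
        using False unfolding q by (subst order_mult) auto
      moreover have "e s' \<le> order (r s') p"
        using insert.prems(2)[of s'] s' False by (simp add: order_divides)
      ultimately show ?thesis by (simp add: order_divides)
    qed
    then have "(\<Prod>s\<in>S. [:-r s, 1:] ^ e s) dvd q"
      using insert.IH insert.prems(1) by auto
    then show ?thesis using insert.hyps by (simp add: q mult_dvd_mono)
  qed simp
qed simp

definition root_divisor :: "nat \<Rightarrow> nat \<Rightarrow> real poly" where
  "root_divisor m a0 = (\<Prod>s\<in>{0..m}. [:-real s, 1:] ^ (if s = a0 then 1 else 2))"

text \<open>A linear functional on \<open>real poly\<close> that kills the multiples of \<open>root_divisor m a0\<close>
  but not a polynomial with double roots at \<open>{0..m}-{a0}\<close> that is nonzero at \<open>a0\<close>,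
  and that only depends on the coefficients of degree at least \<open>2*m\<close>.\<close>
definition remainder_coeff :: "nat \<Rightarrow> nat \<Rightarrow> real poly \<Rightarrow> real" where
  "remainder_coeff m a0 q = coeff (q mod root_divisor m a0) (2 * m)"

lemma root_divisor_eq:
  assumes "a0 \<le> m"
  shows "root_divisor m a0 = [:-real a0, 1:] * (\<Prod>s\<in>{0..m}-{a0}. [:-real s, 1:] ^ 2)"
proof -
  have "(\<Prod>s\<in>{0..m}-{a0}. [:-real s, 1:] ^ (if s = a0 then 1 else 2))
      = (\<Prod>s\<in>{0..m}-{a0}. [:-real s, 1:] ^ 2)"
    by (rule prod.cong) auto
  then show ?thesis
    unfolding root_divisor_def using assms by (subst prod.remove[of _ a0]) auto
qed

lemma degree_double_roots:
  assumes "a0 \<le> m"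
  shows "degree (\<Prod>s\<in>{0..m}-{a0}. [:-real s, 1:] ^ 2) = 2 * m"
  using assms by (simp add: degree_prod_eq_sum_degree degree_linear_power card_Diff_singleton)

lemma degree_root_divisor:
  assumes "a0 \<le> m"
  shows "degree (root_divisor m a0) = 2 * m + 1"
proof -
  have "degree (root_divisor m a0) = degree [:-real a0, 1:] + degree (\<Prod>s\<in>{0..m}-{a0}. [:-real s, 1:] ^ 2)"
    unfolding root_divisor_eq[OF assms] by (rule degree_mult_eq) simp_all
  then show ?thesis using degree_double_roots[OF assms] by simp
qed

lemma poly_mod_sum_left: "(\<Sum>j\<in>A. f j) mod (g :: 'a::field poly) = (\<Sum>j\<in>A. f j mod g)"
  by (induction A rule: infinite_finite_induct) (simp_all add: poly_mod_add_left)

lemma remainder_coeff_eq_sum: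
  assumes "degree q \<le> N"
  shows "remainder_coeff m a0 q = (\<Sum>j\<le>N. coeff q j * remainder_coeff m a0 (monom 1 j))"
proof -
  have "q = (\<Sum>j\<le>N. smult (coeff q j) (monom 1 j))"
    using poly_as_sum_of_monoms'[OF assms] by (simp add: smult_monom)
  then have "q mod root_divisor m a0 = (\<Sum>j\<le>N. smult (coeff q j) (monom 1 j)) mod root_divisor m a0"
    by (rule arg_cong)
  also have "\<dots> = (\<Sum>j\<le>N. smult (coeff q j) (monom 1 j mod root_divisor m a0))"
    by (simp add: poly_mod_sum_left mod_smult_left)
  finally show ?thesis unfolding remainder_coeff_def by (simp add: coeff_sum)
qed

lemma remainder_coeff_monom_eq_0:
  assumes "a0 \<le> m" "j < 2 * m"
  shows "remainder_coeff m a0 (monom 1 j) = 0"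
proof -
  have "monom 1 j mod root_divisor m a0 = monom 1 j"
    using assms by (intro mod_poly_less) (simp add: degree_monom_eq degree_root_divisor)
  then show ?thesis unfolding remainder_coeff_def using assms by simp
qed

lemma remainder_coeff_eq_0:
  assumes "\<And>s. s \<le> m \<Longrightarrow> [:-real s, 1:] ^ (if s = a0 then 1 else 2) dvd q"
  shows "remainder_coeff m a0 q = 0"
proof -
  have "root_divisor m a0 dvd q"
    unfolding root_divisor_def using assms by (intro prod_linear_powers_dvd) auto
  then show ?thesis by (simp add: remainder_coeff_def)
qed

lemma remainder_coeff_nonzero:
  assumes "a0 \<le> m" and "\<And>s. s \<le> m \<Longrightarrow> s \<noteq> a0 \<Longrightarrow> [:-real s, 1:] ^ 2 dvd q"
    and "poly q (real a0) \<noteq> 0"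
  shows "remainder_coeff m a0 q \<noteq> 0"
proof -
  define h where "h = (\<Prod>s\<in>{0..m}-{a0}. [:-real s, 1:] ^ 2)"
  have "h dvd q" unfolding h_def using assms(2) by (intro prod_linear_powers_dvd) auto
  then obtain r where r: "q = h * r" by (elim dvdE)
  define c where "c = poly r (real a0)"
  have "q = h * ([:-real a0, 1:] * synthetic_div r (real a0) + [:c:])"
    unfolding r c_def synthetic_div_correct' ..
  also have "\<dots> = smult c h + synthetic_div r (real a0) * ([:-real a0, 1:] * h)"
    by (simp only: distrib_left mult.commute mult.left_commute) simp
  finally have "q = smult c h + synthetic_div r (real a0) * root_divisor m a0"
    unfolding root_divisor_eq[OF assms(1)] h_def .
  then have "q mod root_divisor m a0 = smult c h"
    using assms(1) by (simp add: mod_poly_less degree_root_divisor h_def degree_double_roots)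
  moreover have "c \<noteq> 0" using assms(3) by (simp add: r c_def)
  moreover have "h \<noteq> 0" by (simp add: h_def)
  ultimately show ?thesis
    using assms(1) by (simp add: remainder_coeff_def h_def[symmetric] degree_double_roots[symmetric])
qed

section \<open>The lower bound\<close>

lemma grid_nat_coords:
  assumes "x \<in> grid m"
  obtains \<beta> where "\<And>i. x $ i = real (\<beta> i)" and "\<And>i. \<beta> i \<le> m"
proof -
  have "\<forall>i. \<exists>t. x $ i = real t \<and> t \<le> m" using assms by (force simp: grid_def)
  then show ?thesis using that by metis
qed

lemma set_coord_in_grid: "x \<in> grid m \<Longrightarrow> s \<le> m \<Longrightarrow> set_coord i x (real s) \<in> grid m"
  by (auto simp: grid_def set_coord_def)

lemma set_coords_in_grid:
  "x \<in> grid m \<Longrightarrow> y \<in> PiE J (\<lambda>_. {0..m}) \<Longrightarrow> set_coords x J y \<in> grid m"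
  by (auto simp: grid_def set_coords_nth PiE_iff)

lemma equations_of_hyperplanes:
  assumes "\<forall>H\<in>#F. affine_hyperplane H"
  obtains C where "F = image_mset hyperplane_of C"
proof -
  have "\<forall>H\<in>#F. \<exists>cb. H = hyperplane_of cb"
    using assms by (fastforce simp: affine_hyperplane_def hyperplane_of_def)
  then obtain cb where "\<forall>H\<in>#F. H = hyperplane_of (cb H)" by metis
  then have "image_mset (hyperplane_of \<circ> cb) F = image_mset id F"
    by (intro image_mset_cong) simp
  then have "F = image_mset hyperplane_of (image_mset cb F)"
    by (simp add: multiset.map_comp)
  then show ?thesis using that by blast
qed

lemma coord_poly_remainder_coeff_line_poly:
  assumes "a0 \<le> m"
  shows "coord_poly (UNIV-{i}) (size C - 2 * m) (\<lambda>x. remainder_coeff m a0 (line_poly i C x))"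
proof -
  have "coord_poly (UNIV-{i}) (size C - 2 * m)
          (\<lambda>x. remainder_coeff m a0 (monom 1 j) * coeff (line_poly i C x) j)" if "j \<le> size C" for j
  proof (cases "j < 2 * m")
    case True
    then show ?thesis using remainder_coeff_monom_eq_0[OF assms True] by (simp add: coord_poly_const)
  next
    case False
    then show ?thesis
      using that by (intro coord_poly.mono[OF coord_poly_scale[OF coord_poly_coeff_line_poly]]) simp_all
  qed
  then have "coord_poly (UNIV-{i}) (size C - 2 * m)
      (\<lambda>x. \<Sum>j\<le>size C. remainder_coeff m a0 (monom 1 j) * coeff (line_poly i C x) j)"
    by (intro coord_poly_sum) auto
  moreover have "(\<lambda>x. remainder_coeff m a0 (line_poly i C x))
      = (\<lambda>x. \<Sum>j\<le>size C. remainder_coeff m a0 (monom 1 j) * coeff (line_poly i C x) j)"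
    by (intro ext, subst remainder_coeff_eq_sum[OF degree_line_poly_le]) (simp add: mult.commute)
  ultimately show ?thesis by (simp only:)
qed

lemma double_root_line_poly:
  assumes "\<forall>x\<in>grid m - {a}. 2 \<le> cover_mult (image_mset hyperplane_of C) x"
    and "set_coord i z (real s) \<in> grid m - {a}"
  shows "[:-real s, 1:] ^ 2 dvd line_poly i C z"
  using assms linear_power_cover_mult_dvd_line_poly le_imp_power_dvd dvd_trans by metis

lemma remainder_coeff_line_poly_eq_0:
  assumes cover: "\<forall>x\<in>grid m - {a}. 2 \<le> cover_mult (image_mset hyperplane_of C) x"
    and z: "z \<in> grid m" and off_line: "j \<noteq> i" "z $ j \<noteq> a $ j"
  shows "remainder_coeff m a0 (line_poly i C z) = 0"
proof (rule remainder_coeff_eq_0)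
  fix s assume "s \<le> m"
  then have "set_coord i z (real s) \<in> grid m - {a}"
    using set_coord_in_grid[OF z] off_line by (auto simp: set_coord_def vec_eq_iff)
  then have "[:-real s, 1:] ^ 2 dvd line_poly i C z" by (rule double_root_line_poly[OF cover])
  then show "[:-real s, 1:] ^ (if s = a0 then 1 else 2) dvd line_poly i C z"
    by (rule dvd_trans[rotated]) (simp add: le_imp_power_dvd)
qed

lemma remainder_coeff_line_poly_nonzero:
  assumes cover: "\<forall>x\<in>grid m - {a}. 2 \<le> cover_mult (image_mset hyperplane_of C) x"
    and avoid: "\<forall>cb\<in>#C. a \<notin> hyperplane_of cb"
    and a: "a \<in> grid m" "a $ i = real a0" "a0 \<le> m"
  shows "remainder_coeff m a0 (line_poly i C a) \<noteq> 0"
proof (rule remainder_coeff_nonzero[OF \<open>a0 \<le> m\<close>])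
  fix s assume "s \<le> m" "s \<noteq> a0"
  then have "set_coord i a (real s) \<in> grid m - {a}"
    using set_coord_in_grid[OF a(1)] a(2) by (auto simp: set_coord_def vec_eq_iff)
  then show "[:-real s, 1:] ^ 2 dvd line_poly i C a" by (rule double_root_line_poly[OF cover])
next
  have "set_coord i a (real a0) = a" using a(2) by (simp add: set_coord_def vec_eq_iff)
  then show "poly (line_poly i C a) (real a0) \<noteq> 0"
    using avoid by (auto simp: poly_line_poly hyperplane_of_def)
qed

lemma size_double_cover_ge:
  fixes a :: "real^'n" and C :: "((real^'n) \<times> real) multiset"
  assumes n: "CARD('n) \<ge> 2" and a: "a \<in> grid m"
    and cover: "\<forall>x\<in>grid m - {a}. 2 \<le> cover_mult (image_mset hyperplane_of C) x"
    and avoid: "\<forall>cb\<in>#C. a \<notin> hyperplane_of cb"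
  shows "m * CARD('n) + m \<le> size C"
proof (rule ccontr)
  assume small: "\<not> ?thesis"
  obtain \<alpha> where \<alpha>: "\<And>i. a $ i = real (\<alpha> i)" "\<And>i. \<alpha> i \<le> m" using grid_nat_coords[OF a] by blast
  obtain i :: 'n where True by simp
  define J where "J = UNIV - {i}"
  define G where "G = (\<lambda>x. remainder_coeff m (\<alpha> i) (line_poly i C x))"
  define y0 where "y0 = restrict \<alpha> J"
  have y0: "y0 \<in> PiE J (\<lambda>_. {0..m})" and a_eq: "set_coords a J y0 = a"
    using \<alpha> by (auto simp: y0_def vec_eq_iff set_coords_nth)
  have "m * CARD('n) = m * (CARD('n) - 1) + m"
    using n by (cases "CARD('n)") simp_all
  moreover have "m \<le> m * (CARD('n) - 1)"
    using mult_le_mono2[of 1 "CARD('n) - 1" m] n by linarith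
  moreover have "sum (\<lambda>_. m) J = m * (CARD('n) - 1)"
    by (simp add: J_def card_Diff_singleton)
  ultimately have "size C - 2 * m < sum (\<lambda>_. m) J"
    using small by linarith
  then have "grid_sum J (\<lambda>_. m) G a = 0"
    using coord_poly_remainder_coeff_line_poly[OF \<alpha>(2)]
    by (intro coord_poly_grid_sum_eq_0) (simp_all add: G_def J_def)
  moreover have "grid_sum J (\<lambda>_. m) G a = grid_weight J (\<lambda>_. m) y0 * G a"
  proof (subst grid_sum_concentrated[OF y0])
    fix y assume y: "y \<in> PiE J (\<lambda>_. {0..m})" "y \<noteq> y0"
    then obtain j where "set_coords a J y $ j \<noteq> a $ j"
      using set_coords_eq_iff[OF y(1) y0] a_eq by (metis vec_eq_iff)
    moreover from this have "j \<noteq> i" by (auto simp: set_coords_nth J_def)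
    ultimately show "G (set_coords a J y) = 0"
      unfolding G_def by (intro remainder_coeff_line_poly_eq_0[OF cover set_coords_in_grid[OF a y(1)]])
  qed (simp add: a_eq)
  moreover have "G a \<noteq> 0"
    unfolding G_def using \<alpha> by (intro remainder_coeff_line_poly_nonzero[OF cover avoid a])
  ultimately show False using grid_weight_nonzero[of J] by simp
qed

lemma k_cover_avoiding_size_ge:
  fixes a :: "real^'n"
  assumes "CARD('n) \<ge> 2" and "a \<in> grid m" and "k_cover_avoiding m 2 a F"
  shows "m * CARD('n) + m \<le> size F"
proof -
  obtain C where F: "F = image_mset hyperplane_of C"
    using assms(3) equations_of_hyperplanes unfolding k_cover_avoiding_def by blast
  show ?thesis
    using assms(3) unfolding F k_cover_avoiding_def
    by (intro order_trans[OF size_double_cover_ge[OF assms(1,2)]]) auto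
qed

section \<open>The construction\<close>

lemma cover_mult_plus: "cover_mult (F + G) x = cover_mult F x + cover_mult G x"
  by (simp add: cover_mult_def)

lemma cover_mult_sum: "cover_mult (\<Sum>i\<in>I. F i) x = (\<Sum>i\<in>I. cover_mult (F i) x)"
  by (induction I rule: infinite_finite_induct) (simp_all add: cover_mult_def)

lemma cover_mult_image_mset_set:
  "finite S \<Longrightarrow> cover_mult (image_mset h (mset_set S)) x = card {s\<in>S. x \<in> h s}"
  by (simp add: cover_mult_def filter_mset_image_mset)

definition axis_family :: "nat \<Rightarrow> real^'n::finite \<Rightarrow> (real^'n) set multiset" where
  "axis_family m a = (\<Sum>i\<in>UNIV. image_mset (\<lambda>t. {x. x $ i = t}) (mset_set (real ` {0..m} - {a $ i})))"

lemma size_axis_family: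
  assumes "a \<in> grid m"
  shows "size (axis_family m a :: (real^'n) set multiset) = m * CARD('n)"
proof -
  have "card (real ` {0..m} - {a $ i}) = m" for i
    using assms by (simp add: grid_def card_Diff_singleton card_image)
  then show ?thesis by (simp add: axis_family_def)
qed

lemma axis_family_avoids:
  assumes "H \<in># axis_family m a"
  shows "affine_hyperplane H \<and> a \<notin> H"
proof -
  obtain i where "H \<in># image_mset (\<lambda>t. {x. x $ i = t}) (mset_set (real ` {0..m} - {a $ i}))"
    using assms unfolding axis_family_def set_mset_sum[OF finite] by blast
  then have "H \<in> (\<lambda>t. {x. x $ i = t}) ` (real ` {0..m} - {a $ i})" by simp
  then obtain t where t: "t \<noteq> a $ i" "H = {x. x $ i = t}" by blast
  have "H = {x. axis i 1 \<bullet> x = t}" using t(2) by (simp add: inner_axis')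
  then have "affine_hyperplane H"
    unfolding affine_hyperplane_def by (intro exI[of _ "axis i 1"] exI[of _ t]) (simp add: axis_eq_0_iff)
  moreover have "a \<notin> H" using t by simp
  ultimately show ?thesis by simp
qed

lemma cover_mult_axis_family:
  assumes "x \<in> grid m"
  shows "cover_mult (axis_family m a) x = card {i. x $ i \<noteq> a $ i}"
proof -
  have "card {t \<in> real ` {0..m} - {a $ i}. x \<in> {x. x $ i = t}} = (if x $ i \<noteq> a $ i then 1 else 0)" for i
  proof -
    have "{t \<in> real ` {0..m} - {a $ i}. x $ i = t} = (if x $ i \<noteq> a $ i then {x $ i} else {})"
      using assms by (auto simp: grid_def)
    then show ?thesis by simp
  qed
  then show ?thesis
    by (simp add: axis_family_def cover_mult_sum cover_mult_image_mset_set sum.If_cases)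
qed

text \<open>For \<open>a \<in> grid m\<close>, \<open>j \<mapsto> grid_offset a i j\<close> maps \<open>{1..m}\<close> onto the nonzero
  differences \<open>x $ i - a $ i\<close> with \<open>x \<in> grid m\<close>.\<close>
definition grid_offset :: "real^'n \<Rightarrow> 'n \<Rightarrow> nat \<Rightarrow> real" where
  "grid_offset a i j = (if real j \<le> a $ i then - real j else real j - a $ i)"

definition diagonal_hyperplane :: "real^'n \<Rightarrow> nat \<Rightarrow> (real^'n) set" where
  "diagonal_hyperplane a j = {x. (\<chi> i. 1 / grid_offset a i j) \<bullet> (x - a) = 1}"

definition diagonal_family :: "nat \<Rightarrow> real^'n \<Rightarrow> (real^'n) set multiset" where
  "diagonal_family m a = image_mset (diagonal_hyperplane a) (mset_set {1..m})"

lemma grid_offset_nonzero: "j \<ge> 1 \<Longrightarrow> grid_offset a i j \<noteq> 0"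
  by (simp add: grid_offset_def)

lemma size_diagonal_family: "size (diagonal_family m a) = m"
  by (simp add: diagonal_family_def)

lemma diagonal_family_avoids:
  fixes a :: "real^'n"
  assumes "H \<in># diagonal_family m a"
  shows "affine_hyperplane H \<and> a \<notin> H"
proof -
  obtain j where j: "j \<ge> 1" "H = diagonal_hyperplane a j"
    using assms by (auto simp: diagonal_family_def)
  define c :: "real^'n" where "c = (\<chi> i. 1 / grid_offset a i j)"
  have "c $ i \<noteq> 0" for i using grid_offset_nonzero[OF j(1)] by (simp add: c_def)
  then have "c \<noteq> 0" by (metis zero_index)
  moreover have "H = {x. c \<bullet> x = 1 + c \<bullet> a}"
    by (auto simp: j(2) diagonal_hyperplane_def c_def[symmetric] inner_diff_right)
  ultimately have "affine_hyperplane H" unfolding affine_hyperplane_def by blast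
  moreover have "a \<notin> H" by (simp add: j(2) diagonal_hyperplane_def)
  ultimately show ?thesis by simp
qed

lemma diagonal_family_covers:
  assumes x: "x \<in> grid m" and a: "a \<in> grid m"
    and differ: "x $ i \<noteq> a $ i" and agree: "\<And>k. k \<noteq> i \<Longrightarrow> x $ k = a $ k"
  shows "1 \<le> cover_mult (diagonal_family m a) x"
proof -
  obtain \<alpha> where \<alpha>: "a $ i = real \<alpha>" "\<alpha> \<le> m" using grid_nat_coords[OF a] by metis
  obtain \<beta> where \<beta>: "x $ i = real \<beta>" "\<beta> \<le> m" using grid_nat_coords[OF x] by metis
  define j where "j = (if \<beta> < \<alpha> then \<alpha> - \<beta> else \<beta>)"
  have j: "j \<in> {1..m}" using differ \<alpha> \<beta> by (auto simp: j_def)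
  have offset: "grid_offset a i j = x $ i - a $ i"
    using differ \<alpha> \<beta> by (auto simp: j_def grid_offset_def of_nat_diff)
  have "(\<chi> k. 1 / grid_offset a k j) \<bullet> (x - a) = (\<Sum>k\<in>UNIV. (x $ k - a $ k) / grid_offset a k j)"
    by (simp add: inner_vec_def)
  also have "\<dots> = (x $ i - a $ i) / grid_offset a i j"
    using agree by (subst sum.remove[of UNIV i]) auto
  also have "\<dots> = 1" using offset differ by simp
  finally have "x \<in> diagonal_hyperplane a j" by (simp add: diagonal_hyperplane_def)
  then have "{s \<in> {1..m}. x \<in> diagonal_hyperplane a s} \<noteq> {}" using j by blast
  then show ?thesis
    by (simp add: diagonal_family_def cover_mult_image_mset_set card_gt_0_iff Suc_le_eq)
qed

lemma double_cover_exists: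
  fixes a :: "real^'n"
  assumes a: "a \<in> grid m"
  shows "k_cover_avoiding m 2 a (axis_family m a + diagonal_family m a)"
proof -
  have "2 \<le> cover_mult (axis_family m a + diagonal_family m a) x" if x: "x \<in> grid m - {a}" for x
  proof -
    define D where "D = {i. x $ i \<noteq> a $ i}"
    have "x \<noteq> a" using x by simp
    then obtain j where "x $ j \<noteq> a $ j" using vec_eq_iff by blast
    then have "D \<noteq> {}" by (auto simp: D_def)
    then have "card D \<noteq> 0" by simp
    then consider "card D \<ge> 2" | "card D = 1" by linarith
    then show ?thesis
    proof cases
      case 1
      then show ?thesis using x by (simp add: cover_mult_plus cover_mult_axis_family D_def)
    next
      case 2
      then obtain i where "D = {i}" by (rule card_1_singletonE)
      then have "1 \<le> cover_mult (diagonal_family m a) x"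
        using x a by (intro diagonal_family_covers[of x m a i]) (auto simp: D_def)
      then show ?thesis using x 2 by (simp add: cover_mult_plus cover_mult_axis_family D_def[symmetric])
    qed
  qed
  then show ?thesis
    unfolding k_cover_avoiding_def by (auto dest: axis_family_avoids diagonal_family_avoids)
qed

theorem theorem2p2:
  fixes a :: "real^'n" and m :: nat
  assumes "m \<ge> 1" and "CARD('n) \<ge> 2" and "a \<in> grid m"
  shows "f_cov m 2 a = m * CARD('n) + m"
  unfolding f_cov_def
proof (rule Least_equality)
  show "\<exists>F. k_cover_avoiding m 2 a F \<and> size F = m * CARD('n) + m"
    using double_cover_exists[OF assms(3)] size_axis_family[OF assms(3)] size_diagonal_family
    by fastforce
next
  fix N assume "\<exists>F. k_cover_avoiding m 2 a F \<and> size F = N"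
  then show "m * CARD('n) + m \<le> N" using k_cover_avoiding_size_ge[OF assms(2,3)] by blast
qed

end
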